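(* For all positive integers $n$ and $r$ with $n\geqslant r+1$, there exists a proper edge coloring $c: E(K_n)\to\mathbb{R}$ such that $\dim W_c(K_n, r)\geqslant\binom{r+1}{2}$.
   Context: All graphs are finite, simple and undirected; $K_n$ is the complete graph on $n$ vertices. For a positive integer $r$ and a graph $G$ with a proper edge coloring $c: E(G)\to\mathbb{R}$, $W_c(G,r)$ is the real vector space of all functions $\phi: E(G)\to\mathbb{R}$ for which there exist real polynomials $\{P_v(x)\}_{v\in V(G)}$ with $\deg P_v\leqslant r-1$ for every vertex $v$ and $P_u(c(uv))=P_v(c(uv))=\phi(uv)$ for every edge $uv\in E(G)$. *)

theory Defs
  imports "HOL-Analysis.Analysis" "HOL-Library.Function_Algebras"
          "HOL-Computational_Algebra.Polynomial"
begin

definition complete_graph_edges :: "nat \<Rightarrow> nat set set" where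
  "complete_graph_edges n = {{u, v} | u v. u < n \<and> v < n \<and> u \<noteq> v}"

definition proper_edge_coloring :: "'a set set \<Rightarrow> ('a set \<Rightarrow> real) \<Rightarrow> bool" where
  "proper_edge_coloring E c \<longleftrightarrow>
     (\<forall>e\<in>E. \<forall>f\<in>E. e \<noteq> f \<and> e \<inter> f \<noteq> {} \<longrightarrow> c e \<noteq> c f)"

text \<open>W_c(G,r): functions on the edge set (represented as functions that vanish
  outside E) admitting vertex polynomials of degree at most r-1 interpolating them.\<close>

definition W_space :: "'a set \<Rightarrow> 'a set set \<Rightarrow> ('a set \<Rightarrow> real) \<Rightarrow> nat \<Rightarrow> ('a set \<Rightarrow> real) set" where
  "W_space V E c r = {\<phi>. (\<forall>e. e \<notin> E \<longrightarrow> \<phi> e = 0) \<and>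
     (\<exists>P :: 'a \<Rightarrow> real poly. (\<forall>v\<in>V. degree (P v) \<le> r - 1) \<and>
        (\<forall>u\<in>V. \<forall>v\<in>V. {u, v} \<in> E \<longrightarrow>
            poly (P u) (c {u, v}) = \<phi> {u, v} \<and> poly (P v) (c {u, v}) = \<phi> {u, v}))}"

definition fun_dim :: "('a set \<Rightarrow> real) set \<Rightarrow> nat" where
  "fun_dim S = vector_space.dim (\<lambda>a f x. a * f x) S"

end

theory Submission
  imports Defs
begin

text \<open>Colour the edge \<open>{u, v}\<close> of \<open>K\<^sub>n\<close> by \<open>u + v\<close>; this colouring is proper.
  For \<open>a < b \<le> r\<close> give the vertex \<open>u\<close> the polynomial
  \<open>P\<^sub>u(t) = (\<Prod>k<a. (u - k) (t - u - k)) \<cdot> (\<Prod>2a < m < a + b. t - m)\<close> of degree \<open>b - 1 \<le> r - 1\<close>.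
  At \<open>t = u + v\<close> the first product becomes the symmetric \<open>\<Prod>k<a. (u - k) (v - k)\<close>, so the
  polynomials of both endpoints agree on every edge and define a function \<open>\<phi>\<^sub>a\<^sub>b \<in> W\<close>.
  It vanishes on each edge \<open>{a', b'}\<close> with \<open>a' < b'\<close> and \<open>(a', b')\<close> lexicographically below
  \<open>(a, b)\<close>, but not on \<open>{a, b}\<close>; this triangularity makes the \<open>(r + 1) choose 2\<close>
  functions \<open>\<phi>\<^sub>a\<^sub>b\<close> linearly independent.\<close>

lemma sum_apply: "(\<Sum>i\<in>A. f i) x = (\<Sum>i\<in>A. f i x)"
  by (induction A rule: infinite_finite_induct) auto

abbreviation (input) pointwise_scale :: "real \<Rightarrow> ('a \<Rightarrow> real) \<Rightarrow> 'a \<Rightarrow> real" where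
  "pointwise_scale \<equiv> \<lambda>a f x. a * f x"

lemma vector_space_pointwise_scale: "vector_space pointwise_scale"
  by unfold_locales (auto simp: algebra_simps fun_eq_iff)

text \<open>The space of all functions is infinite-dimensional, so \<open>independent_card_le_dim\<close> of
  \<open>finite_dimensional_vector_space\<close> is unavailable; a finite spanning set replaces it.\<close>

context vector_space
begin

lemma card_independent_le_dim_if_finite_span:
  assumes "finite T" "V \<subseteq> span T" "B \<subseteq> V" "independent B"
  shows "card B \<le> dim V"
proof -
  obtain C where C: "C \<subseteq> V" "independent C" "V \<subseteq> span C" "card C = dim V"
    using basis_exists .
  have "finite C"
    using independent_span_bound[OF \<open>finite T\<close> \<open>independent C\<close>] C(1) assms(2) by blast
  moreover have "B \<subseteq> span C"
    using assms(3) C(3) by blast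
  ultimately have "card B \<le> card C"
    using independent_span_bound[OF _ \<open>independent B\<close>] by blast
  then show ?thesis
    using C(4) by simp
qed

end

lemma finitely_supported_in_span_indicators:
  fixes f :: "'a \<Rightarrow> real"
  assumes "finite E" "\<And>x. x \<notin> E \<Longrightarrow> f x = 0"
  shows "f \<in> module.span pointwise_scale ((\<lambda>e x. if x = e then 1 else 0) ` E)"
proof -
  interpret pointwise: vector_space pointwise_scale
    by (rule vector_space_pointwise_scale)
  have "f = (\<Sum>e\<in>E. (\<lambda>x. f e * (if x = e then 1 else 0)))"
  proof
    fix x
    have "(\<Sum>e\<in>E. (\<lambda>x. f e * (if x = e then 1 else 0))) x =
        (\<Sum>e\<in>E. if x = e then f e else 0)"
      unfolding sum_apply by (intro sum.cong) auto
    then show "f x = (\<Sum>e\<in>E. (\<lambda>x. f e * (if x = e then 1 else 0))) x"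
      using assms by simp
  qed
  also have "\<dots> \<in> pointwise.span ((\<lambda>e x. if x = e then 1 else 0) ` E)"
    by (intro pointwise.span_sum pointwise.span_scale pointwise.span_base) auto
  finally show ?thesis .
qed

lemma card_independent_le_fun_dim:
  assumes "finite E" "S \<subseteq> {f. \<forall>x. x \<notin> E \<longrightarrow> f x = 0}"
    and "B \<subseteq> S" "module.independent pointwise_scale B"
  shows "card B \<le> fun_dim S"
proof -
  interpret pointwise: vector_space pointwise_scale
    by (rule vector_space_pointwise_scale)
  show ?thesis
    unfolding fun_dim_def
  proof (rule pointwise.card_independent_le_dim_if_finite_span)
    show "S \<subseteq> pointwise.span ((\<lambda>e x. if x = e then 1 else 0) ` E)"
      using finitely_supported_in_span_indicators[OF \<open>finite E\<close>] assms(2) by blast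
  qed (use assms in auto)
qed

lemma triangular_combination_eq_zero:
  fixes \<phi> :: "'i \<Rightarrow> 'p \<Rightarrow> real"
  assumes "wf R" "finite I"
    and triangular: "\<And>i j. i \<in> I \<Longrightarrow> j \<in> I \<Longrightarrow> j \<noteq> i \<Longrightarrow> \<phi> j (p i) \<noteq> 0 \<Longrightarrow> (j, i) \<in> R"
    and diagonal: "\<And>i. i \<in> I \<Longrightarrow> \<phi> i (p i) \<noteq> 0"
    and combination: "\<And>x. (\<Sum>j\<in>I. g j * \<phi> j x) = 0"
    and "i \<in> I"
  shows "g i = 0"
proof (rule ccontr)
  assume "g i \<noteq> 0"
  define Q where "Q = {j \<in> I. g j \<noteq> 0}"
  have "i \<in> Q"
    using \<open>i \<in> I\<close> \<open>g i \<noteq> 0\<close> by (simp add: Q_def)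
  obtain i0 where "i0 \<in> Q" and minimal: "\<And>j. (j, i0) \<in> R \<Longrightarrow> j \<notin> Q"
    using wfE_min[OF \<open>wf R\<close> \<open>i \<in> Q\<close>] by blast
  then have "i0 \<in> I" "g i0 \<noteq> 0"
    by (simp_all add: Q_def)
  have "(\<Sum>j\<in>I - {i0}. g j * \<phi> j (p i0)) = 0"
  proof (rule sum.neutral, rule ballI)
    fix j assume "j \<in> I - {i0}"
    then show "g j * \<phi> j (p i0) = 0"
      using \<open>i0 \<in> I\<close> triangular[of i0 j] minimal[of j] by (auto simp: Q_def)
  qed
  then have "(\<Sum>j\<in>I. g j * \<phi> j (p i0)) = g i0 * \<phi> i0 (p i0)"
    using sum.remove[OF \<open>finite I\<close> \<open>i0 \<in> I\<close>, of "\<lambda>j. g j * \<phi> j (p i0)"] by simp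
  then show False
    using combination[of "p i0"] \<open>g i0 \<noteq> 0\<close> diagonal[OF \<open>i0 \<in> I\<close>] by simp
qed

lemma triangular_family_independent:
  fixes \<phi> :: "'i \<Rightarrow> 'p \<Rightarrow> real"
  assumes "wf R" "finite I"
    and triangular: "\<And>i j. i \<in> I \<Longrightarrow> j \<in> I \<Longrightarrow> j \<noteq> i \<Longrightarrow> \<phi> j (p i) \<noteq> 0 \<Longrightarrow> (j, i) \<in> R"
    and diagonal: "\<And>i. i \<in> I \<Longrightarrow> \<phi> i (p i) \<noteq> 0"
  shows "inj_on \<phi> I" "module.independent pointwise_scale (\<phi> ` I)"
proof -
  interpret pointwise: vector_space pointwise_scale
    by (rule vector_space_pointwise_scale)
  show inj: "inj_on \<phi> I"
  proof (rule inj_onI, rule ccontr)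
    fix i j assume "i \<in> I" "j \<in> I" "\<phi> i = \<phi> j" "i \<noteq> j"
    then have "(j, i) \<in> R" "(i, j) \<in> R"
      using triangular diagonal by metis+
    then show False using wf_not_sym[OF \<open>wf R\<close>] by blast
  qed
  show "pointwise.independent (\<phi> ` I)"
  proof (rule pointwise.independent_if_scalars_zero)
    fix c f assume c: "(\<Sum>f\<in>\<phi> ` I. (\<lambda>x. c f * f x)) = 0" and "f \<in> \<phi> ` I"
    then obtain i where "i \<in> I" "f = \<phi> i" by blast
    have "(\<Sum>j\<in>I. c (\<phi> j) * \<phi> j x) = 0" for x
      using fun_cong[OF c, of x] by (simp add: sum_apply sum.reindex[OF inj])
    then show "c f = 0"
      using triangular_combination_eq_zero[where \<phi>=\<phi> and p=p and g="c \<circ> \<phi>", OF assms]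
        \<open>i \<in> I\<close> \<open>f = \<phi> i\<close>
      by simp
  qed (use \<open>finite I\<close> in simp)
qed

lemma complete_graph_edge_iff:
  "{u, v} \<in> complete_graph_edges n \<longleftrightarrow> u \<noteq> v \<and> u < n \<and> v < n"
  unfolding complete_graph_edges_def by (auto simp: doubleton_eq_iff)

lemma complete_graph_edgeE:
  assumes "e \<in> complete_graph_edges n"
  obtains u v where "e = {u, v}" "u < v" "v < n"
proof -
  obtain u v where "e = {u, v}" "u \<noteq> v" "u < n" "v < n"
    using assms unfolding complete_graph_edges_def by blast
  then show thesis
    using that[of u v] that[of v u] by (cases "u < v") (auto simp: insert_commute)
qed

lemma finite_complete_graph_edges: "finite (complete_graph_edges n)"
  by (rule finite_subset[of _ "Pow {..<n}"]) (auto simp: complete_graph_edges_def)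

lemma W_space_subset_vanishing_outside: "W_space V E c r \<subseteq> {\<phi>. \<forall>e. e \<notin> E \<longrightarrow> \<phi> e = 0}"
  unfolding W_space_def by blast

definition sum_coloring :: "nat set \<Rightarrow> real" where
  "sum_coloring e = real (\<Sum>e)"

lemma proper_sum_coloring: "proper_edge_coloring (complete_graph_edges n) sum_coloring"
  unfolding proper_edge_coloring_def
proof (intro ballI impI)
  fix e f assume "e \<in> complete_graph_edges n" "f \<in> complete_graph_edges n"
    and "e \<noteq> f \<and> e \<inter> f \<noteq> {}"
  then show "sum_coloring e \<noteq> sum_coloring f"
    by (elim complete_graph_edgeE) (auto simp: sum_coloring_def)
qed

definition vertex_poly :: "nat \<Rightarrow> nat \<Rightarrow> nat \<Rightarrow> real poly" where
  "vertex_poly a b u =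
     (\<Prod>k<a. smult (real u - real k) [:- real u - real k, 1:]) *
     (\<Prod>m\<in>{2*a+1..<a+b}. [:- real m, 1:])"

definition edge_function :: "nat \<Rightarrow> nat \<Rightarrow> nat \<Rightarrow> nat set \<Rightarrow> real" where
  "edge_function n a b e =
     (if e \<in> complete_graph_edges n
      then (\<Prod>k<a. \<Prod>w\<in>e. real w - real k) * (\<Prod>m\<in>{2*a+1..<a+b}. sum_coloring e - real m)
      else 0)"

lemma poly_vertex_poly:
  "poly (vertex_poly a b u) (real u + real v) =
     (\<Prod>k<a. (real u - real k) * (real v - real k)) * (\<Prod>m\<in>{2*a+1..<a+b}. real u + real v - real m)"
  unfolding vertex_poly_def poly_mult poly_prod by (simp add: algebra_simps)

lemma edge_function_edge:
  assumes "u \<noteq> v" "u < n" "v < n"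
  shows "edge_function n a b {u, v} =
     (\<Prod>k<a. (real u - real k) * (real v - real k)) * (\<Prod>m\<in>{2*a+1..<a+b}. real u + real v - real m)"
  using assms by (simp add: edge_function_def complete_graph_edge_iff sum_coloring_def)

lemma degree_vertex_poly:
  assumes "a < b"
  shows "degree (vertex_poly a b u) \<le> b - 1"
proof -
  have "degree (\<Prod>k<a. smult (real u - real k) [:- real u - real k, 1:]) \<le> (\<Sum>k<a. 1)"
    by (intro order_trans[OF degree_prod_sum_le] sum_mono) auto
  moreover have "degree (\<Prod>m\<in>{2*a+1..<a+b}. [:- real m, 1:]) \<le> (\<Sum>m\<in>{2*a+1..<a+b}. 1)"
    by (intro order_trans[OF degree_prod_sum_le] sum_mono) auto
  ultimately have "degree (vertex_poly a b u) \<le> a + (b - a - 1)"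
    unfolding vertex_poly_def by (auto intro: order_trans[OF degree_mult_le])
  then show ?thesis using assms by simp
qed

lemma edge_function_in_W_space:
  assumes "a < b" "b \<le> r"
  shows "edge_function n a b \<in> W_space {..<n} (complete_graph_edges n) sum_coloring r"
  unfolding W_space_def
proof (intro CollectI conjI allI impI exI[of _ "vertex_poly a b"] ballI)
  show "edge_function n a b e = 0" if "e \<notin> complete_graph_edges n" for e
    using that by (simp add: edge_function_def)
  show "degree (vertex_poly a b v) \<le> r - 1" for v
    using degree_vertex_poly[OF \<open>a < b\<close>] assms(2) by (meson diff_le_mono order_trans)
  fix u v assume "{u, v} \<in> complete_graph_edges n"
  then have uv: "u \<noteq> v" "u < n" "v < n" and c: "sum_coloring {u, v} = real u + real v"
    by (auto simp: complete_graph_edge_iff sum_coloring_def)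
  show "poly (vertex_poly a b u) (sum_coloring {u, v}) = edge_function n a b {u, v}"
    using uv unfolding c poly_vertex_poly by (simp add: edge_function_edge)
  show "poly (vertex_poly a b v) (sum_coloring {u, v}) = edge_function n a b {u, v}"
    using uv unfolding c add.commute[of "real u"] poly_vertex_poly
    by (simp add: edge_function_edge mult.commute add.commute)
qed

lemma edge_function_eq_zero:
  assumes "u < v" "v < n" "u < a \<or> u = a \<and> v < b"
  shows "edge_function n a b {u, v} = 0"
proof -
  have "(\<exists>k\<in>{..<a}. (real u - real k) * (real v - real k) = 0) \<or>
        (\<exists>m\<in>{2*a+1..<a+b}. real u + real v - real m = 0)"
    using assms(3)
  proof
    assume "u < a"
    then show ?thesis by (intro disjI1 bexI[of _ u]) auto
  next
    assume "u = a \<and> v < b"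
    then show ?thesis using \<open>u < v\<close> by (intro disjI2 bexI[of _ "a + v"]) auto
  qed
  then show ?thesis
    using assms by (auto simp: edge_function_edge)
qed

lemma edge_function_diagonal:
  assumes "a < b" "b < n"
  shows "edge_function n a b {a, b} \<noteq> 0"
  using assms by (simp add: edge_function_edge)

definition increasing_pairs :: "nat \<Rightarrow> (nat \<times> nat) set" where
  "increasing_pairs r = {(a, b). a < b \<and> b \<le> r}"

lemma finite_increasing_pairs: "finite (increasing_pairs r)"
  unfolding increasing_pairs_def by (rule finite_subset[of _ "{..r} \<times> {..r}"]) auto

lemma card_increasing_pairs: "card (increasing_pairs r) = (r + 1) choose 2"
proof (induction r)
  case 0
  have "increasing_pairs 0 = {}"
    by (auto simp: increasing_pairs_def)
  then show ?case by simp
next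
  case (Suc r)
  have "increasing_pairs (Suc r) = increasing_pairs r \<union> (\<lambda>a. (a, Suc r)) ` {..r}"
    by (auto simp: increasing_pairs_def)
  then have "card (increasing_pairs (Suc r)) =
      card (increasing_pairs r) + card ((\<lambda>a. (a, Suc r)) ` {..r})"
    using finite_increasing_pairs
    by (simp only:) (rule card_Un_disjoint, auto simp: increasing_pairs_def)
  also have "\<dots> = (r + 1 choose 2) + (r + 1)"
    using Suc.IH by (simp add: card_image inj_on_def)
  finally show ?case
    by (simp add: numeral_2_eq_2)
qed

lemma edge_functions_independent:
  assumes "r < n"
  shows "inj_on (\<lambda>(a, b). edge_function n a b) (increasing_pairs r)"
    and "module.independent pointwise_scale ((\<lambda>(a, b). edge_function n a b) ` increasing_pairs r)"
proof -
  let ?\<phi> = "\<lambda>(a, b). edge_function n a b"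
  let ?p = "\<lambda>(a, b). {a, b}"
  have triangular: "(j, i) \<in> less_than <*lex*> less_than"
    if "i \<in> increasing_pairs r" "j \<in> increasing_pairs r" "j \<noteq> i" "?\<phi> j (?p i) \<noteq> 0" for i j
  proof -
    obtain a b a' b' where ij: "j = (a, b)" "i = (a', b')"
      by (cases i, cases j)
    then have "a' < b'" "b' < n"
      using that(1) assms by (auto simp: increasing_pairs_def)
    then have "\<not> (a' < a \<or> a' = a \<and> b' < b)"
      using edge_function_eq_zero[of a' b' n a b] that(4) ij by auto
    then show ?thesis
      using that(3) ij by auto
  qed
  have diagonal: "?\<phi> i (?p i) \<noteq> 0" if "i \<in> increasing_pairs r" for i
    using that assms by (cases i) (simp add: edge_function_diagonal increasing_pairs_def)
  show "inj_on ?\<phi> (increasing_pairs r)"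
    and "module.independent pointwise_scale (?\<phi> ` increasing_pairs r)"
    using triangular_family_independent[where \<phi>="?\<phi>" and p="?p",
      OF wf_lex_prod[OF wf_less_than wf_less_than] finite_increasing_pairs triangular diagonal]
    by blast+
qed

theorem lemma3p3:
  fixes n r :: nat
  assumes "r \<ge> 1" and "n \<ge> r + 1"
  shows "\<exists>c. proper_edge_coloring (complete_graph_edges n) c \<and>
           fun_dim (W_space {..<n} (complete_graph_edges n) c r) \<ge> (r + 1) choose 2"
proof (intro exI conjI)
  show "proper_edge_coloring (complete_graph_edges n) sum_coloring"
    by (rule proper_sum_coloring)
  let ?W = "W_space {..<n} (complete_graph_edges n) sum_coloring r"
  let ?\<Phi> = "(\<lambda>(a, b). edge_function n a b) ` increasing_pairs r"
  have "r < n"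
    using assms(2) by simp
  have "?\<Phi> \<subseteq> ?W"
    using edge_function_in_W_space by (auto simp: increasing_pairs_def)
  then have "card ?\<Phi> \<le> fun_dim ?W"
    by (rule card_independent_le_fun_dim[OF finite_complete_graph_edges
          W_space_subset_vanishing_outside _ edge_functions_independent(2)[OF \<open>r < n\<close>]])
  moreover have "card ?\<Phi> = (r + 1) choose 2"
    using card_image[OF edge_functions_independent(1)[OF \<open>r < n\<close>]] card_increasing_pairs by simp
  ultimately show "fun_dim ?W \<ge> (r + 1) choose 2"
    by simp
qed

end
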